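(* Suppose $\mathbb{F}$ has characteristic $2$ and $S$ is a symplectic form on $V$. Then there is no Weyl multiplier $m$ for $(V,S)$ taking values in $\{+1,-1\}$.
   Context: $\mathbb{F}$ is a finite field with $|\mathbb{F}|=2^n$, $\mathrm{Tr}:\mathbb{F}\to\mathbb{Z}_2$ is the field trace, and $V$ is a $2$-dimensional $\mathbb{F}$-vector space. A symplectic form is a nonzero $\mathbb{F}$-bilinear $S:V\times V\to\mathbb{F}$ with $S(\mathbf{v},\mathbf{v})=0$ for all $\mathbf{v}$. A Weyl multiplier for $(V,S)$ is a function $m:V\times V\to\{z\in\mathbb{C}:|z|=1\}$ with the following properties: - the cocycle identity $m(\mathbf{u}+\mathbf{v},\mathbf{w})m(\mathbf{u},\mathbf{v})=m(\mathbf{u},\mathbf{v}+\mathbf{w})m(\mathbf{v},\mathbf{w})$ holds; - $m(\mathbf{d}_1,\mathbf{d}_2)=1$ whenever $\mathbf{d}_1,\mathbf{d}_2$ lie in a common $1$-dimensional subspace; - $\overline{m(\mathbf{u},\mathbf{v})}m(\mathbf{v},\mathbf{u})=(-1)^{\mathrm{Tr}\,S(\mathbf{u},\mathbf{v})}$ for all $\mathbf{u},\mathbf{v}\in V$. *)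

theory Defs
  imports Complex_Main
begin

text \<open>Field trace of GF(2^n) over GF(2): Tr x = x + x^2 + x^4 + ... + x^(2^(n-1)).
  Its values lie in the prime field {0,1}.\<close>
definition field_trace :: "nat \<Rightarrow> 'f::field \<Rightarrow> 'f" where
  "field_trace n x = (\<Sum>i<n. x ^ (2 ^ i))"

text \<open>(-1)^(Tr x), with Tr x read in Z_2 = {0,1}.\<close>
definition trace_sign :: "nat \<Rightarrow> 'f::field \<Rightarrow> complex" where
  "trace_sign n x = (if field_trace n x = 0 then 1 else -1)"

definition symplectic_form ::
  "('f::field \<Rightarrow> 'v::ab_group_add \<Rightarrow> 'v) \<Rightarrow> ('v \<Rightarrow> 'v \<Rightarrow> 'f) \<Rightarrow> bool" where
  "symplectic_form scale S \<longleftrightarrow>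
     (\<forall>u v w. S (u + v) w = S u w + S v w) \<and>
     (\<forall>a u w. S (scale a u) w = a * S u w) \<and>
     (\<forall>u v w. S u (v + w) = S u v + S u w) \<and>
     (\<forall>a u w. S u (scale a w) = a * S u w) \<and>
     (\<exists>u v. S u v \<noteq> 0) \<and>
     (\<forall>v. S v v = 0)"

definition weyl_multiplier ::
  "nat \<Rightarrow> ('f::field \<Rightarrow> 'v::ab_group_add \<Rightarrow> 'v) \<Rightarrow> ('v \<Rightarrow> 'v \<Rightarrow> 'f)
     \<Rightarrow> ('v \<Rightarrow> 'v \<Rightarrow> complex) \<Rightarrow> bool" where
  "weyl_multiplier n scale S m \<longleftrightarrow>
     (\<forall>u v. norm (m u v) = 1) \<and>
     (\<forall>u v w. m (u + v) w * m u v = m u (v + w) * m v w) \<and>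
     (\<forall>d1 d2. (\<exists>W. module.subspace scale W \<and> vector_space.dim scale W = 1
                   \<and> d1 \<in> W \<and> d2 \<in> W) \<longrightarrow> m d1 d2 = 1) \<and>
     (\<forall>u v. cnj (m u v) * m v u = trace_sign n (S u v))"

end

theory Submission
  imports Defs "HOL-Computational_Algebra.Polynomial"
begin

text \<open>
  In characteristic 2 every vector is its own negative. For a normalised cocycle this forces
  \<open>m u v * m v u = 1\<close>, so a multiplier with values in \<open>{1, -1}\<close> has
  \<open>cnj (m u v) * m v u = 1\<close>, i.e. \<open>Tr (S u v) = 0\<close> for all \<open>u, v\<close>. But \<open>S\<close> is
  onto \<open>\<bbbF>\<close>, while the trace, a polynomial of degree \<open>2^(n-1) < |\<bbbF>|\<close>, cannot vanish on
  all of \<open>\<bbbF>\<close>.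
\<close>

definition trace_poly :: "nat \<Rightarrow> 'f::field poly" where
  "trace_poly n = (\<Sum>i<n. monom 1 (2 ^ i))"

lemma poly_trace_poly: "poly (trace_poly n) x = field_trace n x"
  unfolding trace_poly_def field_trace_def poly_sum by (simp add: poly_monom)

lemma degree_trace_poly_le: "degree (trace_poly n :: 'f::field poly) \<le> 2 ^ (n - 1)"
  unfolding trace_poly_def
proof (rule degree_sum_le)
  fix i assume "i \<in> {..<n}"
  then have "(2::nat) ^ i \<le> 2 ^ (n - 1)" by (intro power_increasing) auto
  then show "degree (monom (1::'f) (2 ^ i)) \<le> 2 ^ (n - 1)" by (simp add: degree_monom_eq)
qed simp

lemma coeff_trace_poly_1:
  assumes "n \<ge> 1"
  shows "coeff (trace_poly n :: 'f::field poly) 1 = 1"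
proof -
  have "(2::nat) ^ i = 1 \<longleftrightarrow> i = 0" for i by (cases i) auto
  then have "coeff (trace_poly n :: 'f poly) 1 = (\<Sum>i<n. if i = 0 then 1 else 0)"
    unfolding trace_poly_def coeff_sum by (simp add: eq_commute)
  also have "\<dots> = 1" using assms by simp
  finally show ?thesis .
qed

lemma field_trace_not_identically_zero:
  assumes card_F: "card (UNIV :: 'f::{field,finite} set) = 2 ^ n"
  shows "\<exists>a::'f. field_trace n a \<noteq> 0"
proof (rule ccontr)
  assume "\<not> (\<exists>a::'f. field_trace n a \<noteq> 0)"
  then have roots: "{x. poly (trace_poly n) x = 0} = (UNIV :: 'f set)"
    by (simp add: poly_trace_poly)
  have "n \<ge> 1"
  proof (rule ccontr)
    assume "\<not> n \<ge> 1"
    then have "card (UNIV :: 'f set) = 1" using card_F by simp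
    moreover have "card {0::'f, 1} \<le> card (UNIV :: 'f set)" by (rule card_mono) auto
    ultimately show False by simp
  qed
  then have "trace_poly n \<noteq> (0 :: 'f poly)"
    using coeff_trace_poly_1[OF \<open>n \<ge> 1\<close>] by (metis coeff_0 zero_neq_one)
  then have "card (UNIV :: 'f set) \<le> 2 ^ (n - 1)"
    using card_poly_roots_bound roots degree_trace_poly_le order.trans by metis
  moreover have "(2::nat) ^ (n - 1) < 2 ^ n" using \<open>n \<ge> 1\<close> by simp
  ultimately show False using card_F by linarith
qed

lemma symplectic_form_surj:
  assumes "symplectic_form scale S"
  shows "\<exists>u v. S u v = a"
proof -
  obtain u v where "S u v \<noteq> 0" using assms unfolding symplectic_form_def by blast
  then have "S (scale (a / S u v) u) v = a" using assms unfolding symplectic_form_def by simp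
  then show ?thesis by blast
qed

lemma (in vector_space) add_self_eq_zero:
  fixes x :: 'b
  assumes "(2::'a) = 0"
  shows "x + x = 0"
proof -
  have "x + x = scale (1 + 1) x" by (simp only: scale_left_distrib scale_one)
  then show ?thesis using assms by (simp add: one_add_one)
qed

lemma (in vector_space) exists_line_containing:
  fixes x :: 'b
  assumes "dim (UNIV :: 'b set) \<noteq> 0"
  shows "\<exists>W. subspace W \<and> dim W = 1 \<and> x \<in> W"
proof -
  have "\<exists>w::'b. w \<noteq> 0"
  proof (rule ccontr)
    assume "\<nexists>w::'b. w \<noteq> 0"
    then have "UNIV = span {}" by (auto simp: span_empty)
    then show False using assms dim_span_eq_card_independent[OF independent_empty] by simp
  qed
  then obtain w :: 'b where "w \<noteq> 0" by blast
  obtain d where d: "d \<noteq> 0" "x \<in> span {d}"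
  proof (cases "x = 0")
    case True
    then show ?thesis using that[OF \<open>w \<noteq> 0\<close>] span_zero by simp
  next
    case False
    then show ?thesis using that span_base[of x "{x}"] by simp
  qed
  have "dim (span {d}) = 1"
    using d(1) dim_span_eq_card_independent[of "{d}"] independent_insert[of d "{}"] by simp
  then show ?thesis using d(2) subspace_span by blast
qed

lemma cocycle_mult_swap_eq_1:
  fixes m :: "'v::ab_group_add \<Rightarrow> 'v \<Rightarrow> 'a::comm_ring_1" and u v :: 'v
  assumes cocycle: "\<And>u v w. m (u + v) w * m u v = m u (v + w) * m v w"
    and m_zero: "\<And>x. m x 0 = 1"
    and m_diag: "\<And>x. m x x = 1"
    and exp2: "\<And>x::'v. x + x = 0"
  shows "m u v * m v u = 1"
proof -
  have "m (u + v) u * m v u = m v (u + u) * m u u"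
    using cocycle[of v u u] by (simp add: add.commute)
  also have "\<dots> = 1" by (simp only: exp2[of u] m_zero m_diag mult_1)
  finally have swap_u: "m (u + v) u * m v u = 1" .
  have "m ((u + v) + u) v * m (u + v) u = m (u + v) (u + v) * m u v"
    by (rule cocycle)
  moreover have "(u + v) + u = v"
    by (metis add.commute add.left_commute add_0_right exp2)
  ultimately have "m (u + v) u = m u v" by (simp add: m_diag)
  with swap_u show ?thesis by simp
qed

lemma weyl_multiplier_mult_swap_eq_1:
  fixes scale :: "'f::field \<Rightarrow> 'v::ab_group_add \<Rightarrow> 'v"
  assumes vs: "vector_space scale"
    and dim_nonzero: "vector_space.dim scale (UNIV :: 'v set) \<noteq> 0"
    and char2: "(2::'f) = 0"
    and wm: "weyl_multiplier n scale S m"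
  shows "m u v * m v u = 1"
proof -
  interpret V: vector_space scale by (rule vs)
  have cocycle: "\<And>u v w. m (u + v) w * m u v = m u (v + w) * m v w"
    and on_lines: "\<And>d1 d2. \<exists>W. V.subspace W \<and> V.dim W = 1 \<and> d1 \<in> W \<and> d2 \<in> W \<Longrightarrow> m d1 d2 = 1"
    using wm unfolding weyl_multiplier_def by blast+
  have "m x y = 1" if "y \<in> {0, x}" for x y
  proof -
    obtain W where W: "V.subspace W" "V.dim W = 1" "x \<in> W"
      using V.exists_line_containing[OF dim_nonzero] by blast
    then have "y \<in> W" using that V.subspace_0 by blast
    with W show ?thesis using on_lines by blast
  qed
  then show ?thesis
    using cocycle_mult_swap_eq_1[OF cocycle] V.add_self_eq_zero[OF char2] by blast
qed

theorem mainTheorem6: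
  fixes scale :: "'f::{field,finite} \<Rightarrow> 'v::ab_group_add \<Rightarrow> 'v"
    and S :: "'v \<Rightarrow> 'v \<Rightarrow> 'f"
    and n :: nat
  assumes card_F: "card (UNIV :: 'f set) = 2 ^ n"
    and char2: "(2::'f) = 0"
    and vs: "vector_space scale"
    and dim2: "vector_space.dim scale (UNIV :: 'v set) = 2"
    and symp: "symplectic_form scale S"
  shows "\<not> (\<exists>m. weyl_multiplier n scale S m \<and> (\<forall>u v. m u v \<in> {1, -1}))"
proof
  assume "\<exists>m. weyl_multiplier n scale S m \<and> (\<forall>u v. m u v \<in> {1, -1})"
  then obtain m where wm: "weyl_multiplier n scale S m" and sign: "\<And>u v. m u v \<in> {1, -1}"
    by blast
  have "cnj (m u v) = m u v" for u v
    using sign[of u v] by auto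
  moreover have "m u v * m v u = 1" for u v
    using weyl_multiplier_mult_swap_eq_1[OF vs _ char2 wm] dim2 by simp
  moreover have "cnj (m u v) * m v u = trace_sign n (S u v)" for u v
    using wm unfolding weyl_multiplier_def by blast
  ultimately have trace_sign_one: "trace_sign n (S u v) = 1" for u v
    by metis
  have "field_trace n a = 0" for a :: 'f
  proof -
    obtain u v where "S u v = a" using symplectic_form_surj[OF symp] by blast
    then show ?thesis using trace_sign_one[of u v] unfolding trace_sign_def by (simp split: if_splits)
  qed
  then show False using field_trace_not_identically_zero[OF card_F] by simp
qed

end
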